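(* Let $n\geq 5$ and let $f$ be a permutation of $V(\overline{C_n})$ that is not an automorphism of $\overline{C_n}$. Then $\delta_f(\overline{C_n})\geq 4$.
   Context: $C_n$ is the cycle on vertices $v_1,\dots,v_n$ (with $v_i$ adjacent to $v_{i+1}$, indices mod $n$), and $\overline{C_n}$ is its complement: two distinct vertices are adjacent in $\overline{C_n}$ iff they are not adjacent in $C_n$. $d(x,y)$ denotes the distance in $\overline{C_n}$. For a permutation $f$ of the vertex set and distinct vertices $x,y$, $\delta_f(x,y)=|d(x,y)-d(f(x),f(y))|$, and $\delta_f(\overline{C_n})=\sum\delta_f(x,y)$ over all unordered pairs $\{x,y\}$ of distinct vertices. *)

theory Defs
  imports Main
begin

definition cyc_adj :: "nat \<Rightarrow> nat \<Rightarrow> nat \<Rightarrow> bool" where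
  "cyc_adj n x y \<longleftrightarrow> x < n \<and> y < n \<and> x \<noteq> y \<and> (y = (x + 1) mod n \<or> x = (y + 1) mod n)"

definition ccyc_adj :: "nat \<Rightarrow> nat \<Rightarrow> nat \<Rightarrow> bool" where
  "ccyc_adj n x y \<longleftrightarrow> x < n \<and> y < n \<and> x \<noteq> y \<and> \<not> cyc_adj n x y"

fun ccyc_walk :: "nat \<Rightarrow> nat \<Rightarrow> nat \<Rightarrow> nat \<Rightarrow> bool" where
  "ccyc_walk n 0 x y \<longleftrightarrow> x = y"
| "ccyc_walk n (Suc k) x y \<longleftrightarrow> (\<exists>z. ccyc_adj n x z \<and> ccyc_walk n k z y)"

definition ccyc_dist :: "nat \<Rightarrow> nat \<Rightarrow> nat \<Rightarrow> nat" where
  "ccyc_dist n x y = (LEAST k. ccyc_walk n k x y)"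

definition is_perm :: "nat \<Rightarrow> (nat \<Rightarrow> nat) \<Rightarrow> bool" where
  "is_perm n f \<longleftrightarrow> bij_betw f {..<n} {..<n}"

definition ccyc_aut :: "nat \<Rightarrow> (nat \<Rightarrow> nat) \<Rightarrow> bool" where
  "ccyc_aut n f \<longleftrightarrow> is_perm n f \<and>
     (\<forall>x<n. \<forall>y<n. ccyc_adj n (f x) (f y) \<longleftrightarrow> ccyc_adj n x y)"

definition delta_pair :: "nat \<Rightarrow> (nat \<Rightarrow> nat) \<Rightarrow> nat \<Rightarrow> nat \<Rightarrow> nat" where
  "delta_pair n f x y = nat \<bar>int (ccyc_dist n x y) - int (ccyc_dist n (f x) (f y))\<bar>"

definition delta_total :: "nat \<Rightarrow> (nat \<Rightarrow> nat) \<Rightarrow> nat" where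
  "delta_total n f = (\<Sum>(x, y) \<in> {(x, y). x < y \<and> y < n}. delta_pair n f x y)"

end

(*
  For n \<ge> 5 the complement of C_n has diameter 2: distinct vertices are at distance 2 when
  they are consecutive on the cycle and at distance 1 otherwise.  So every delta_f(x, y) is
  0 or 1, and delta_f counts the pairs whose adjacency in C_n is changed by f, i.e. the
  symmetric difference of the edge sets of C_n and of its pull-back along f.  Both graphs are
  2-regular, so a vertex that loses an edge gains one: starting from a changed edge ab and
  exchanging at a, at b and at the new neighbour c of a gives four distinct changed edges.
*)

theory Submission
  imports Defs
begin

definition changed_edges ::
    "'a::linorder set \<Rightarrow> ('a \<Rightarrow> 'a \<Rightarrow> bool) \<Rightarrow> ('a \<Rightarrow> 'a \<Rightarrow> bool) \<Rightarrow> ('a \<times> 'a) set"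
  where "changed_edges V P Q = {(x, y). x \<in> V \<and> y \<in> V \<and> x < y \<and> P x y \<noteq> Q x y}"

lemma changed_edges_commute: "changed_edges V P Q = changed_edges V Q P"
  unfolding changed_edges_def by auto

lemma finite_changed_edges: "finite V \<Longrightarrow> finite (changed_edges V P Q)"
  unfolding changed_edges_def by (rule finite_subset[of _ "V \<times> V"]) auto

lemma min_max_in_changed_edges:
  assumes "symp P" "symp Q" "x \<in> V" "y \<in> V" "x \<noteq> y" "P x y \<noteq> Q x y"
  shows "(min x y, max x y) \<in> changed_edges V P Q"
proof -
  have "P y x \<noteq> Q y x"
    using assms(1,2,6) by (blast dest: sympD)
  then show ?thesis
    using assms(3-6) unfolding changed_edges_def by (auto simp: min_def max_def)
qed

lemma equal_degree_exchange:
  assumes "finite V"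
    and "card {w \<in> V. P v w} = card {w \<in> V. Q v w}"
    and "u \<in> V" "P v u" "\<not> Q v u"
  obtains w where "w \<in> V" "Q v w" "\<not> P v w"
proof -
  have "\<not> {w \<in> V. Q v w} \<subseteq> {w \<in> V. P v w}"
  proof
    assume "{w \<in> V. Q v w} \<subseteq> {w \<in> V. P v w}"
    then have "{w \<in> V. Q v w} = {w \<in> V. P v w}"
      using assms(1,2) by (intro card_subset_eq) auto
    then show False
      using assms(3-5) by blast
  qed
  then show thesis
    using that by blast
qed

lemma card_changed_edges_ge_4_oriented:
  fixes P Q :: "'a::linorder \<Rightarrow> 'a \<Rightarrow> bool"
  assumes "finite V" "symp P" "symp Q" "irreflp P" "irreflp Q"
    and degree: "\<And>v. v \<in> V \<Longrightarrow> card {w \<in> V. P v w} = card {w \<in> V. Q v w}"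
    and "a \<in> V" "b \<in> V" "P a b" "\<not> Q a b"
  shows "4 \<le> card (changed_edges V P Q)"
proof -
  have symP: "P x y = P y x" and symQ: "Q x y = Q y x" for x y
    using \<open>symp P\<close> \<open>symp Q\<close> by (blast dest: sympD)+
  have irr: "\<not> P x x" "\<not> Q x x" for x
    using \<open>irreflp P\<close> \<open>irreflp Q\<close> by (simp_all add: irreflpD)
  obtain c where c: "c \<in> V" "Q a c" "\<not> P a c"
    using equal_degree_exchange[where P = P and Q = Q, OF \<open>finite V\<close> degree[OF \<open>a \<in> V\<close>]]
      \<open>b \<in> V\<close> \<open>P a b\<close> \<open>\<not> Q a b\<close> by blast
  obtain d where d: "d \<in> V" "Q b d" "\<not> P b d"
    using equal_degree_exchange[where P = P and Q = Q, OF \<open>finite V\<close> degree[OF \<open>b \<in> V\<close>]]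
      \<open>a \<in> V\<close> \<open>P a b\<close> \<open>\<not> Q a b\<close> symP[of a b] symQ[of a b] by blast
  obtain e where e: "e \<in> V" "P c e" "\<not> Q c e"
    using equal_degree_exchange[where P = Q and Q = P, OF \<open>finite V\<close> degree[OF \<open>c \<in> V\<close>, symmetric]]
      \<open>a \<in> V\<close> c symP[of a c] symQ[of a c] by blast
  define edge where "edge x y = (min x y, max x y)" for x y :: 'a
  have edge_eq_iff: "edge x y = edge u v \<longleftrightarrow> (x = u \<and> y = v) \<or> (x = v \<and> y = u)" for x y u v
    unfolding edge_def min_def max_def by auto
  have "a \<noteq> b" "a \<noteq> c" "b \<noteq> d" "c \<noteq> e"
    using \<open>P a b\<close> \<open>Q a c\<close> \<open>Q b d\<close> \<open>P c e\<close> irr by auto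
  moreover have "b \<noteq> c" "a \<noteq> d" "a \<noteq> e"
    using \<open>\<not> Q a b\<close> \<open>Q a c\<close> \<open>Q b d\<close> \<open>\<not> P a c\<close> \<open>P c e\<close> symP[of a c] symQ[of a b] by auto
  moreover have "b \<noteq> e \<or> c \<noteq> d"
    using \<open>\<not> P b d\<close> \<open>P c e\<close> symP[of b d] by auto
  ultimately have "4 = card {edge a b, edge a c, edge b d, edge c e}"
    by (auto simp: edge_eq_iff)
  also have "\<dots> \<le> card (changed_edges V P Q)"
    using assms(1-3,7-10) c d e \<open>a \<noteq> b\<close> \<open>a \<noteq> c\<close> \<open>b \<noteq> d\<close> \<open>c \<noteq> e\<close>
    by (intro card_mono finite_changed_edges) (auto simp: edge_def min_max_in_changed_edges)
  finally show ?thesis .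
qed

lemma card_changed_edges_ge_4:
  fixes P Q :: "'a::linorder \<Rightarrow> 'a \<Rightarrow> bool"
  assumes "finite V" "symp P" "symp Q" "irreflp P" "irreflp Q"
    and "\<And>v. v \<in> V \<Longrightarrow> card {w \<in> V. P v w} = card {w \<in> V. Q v w}"
    and "a \<in> V" "b \<in> V" "P a b \<noteq> Q a b"
  shows "4 \<le> card (changed_edges V P Q)"
proof (cases "P a b")
  case True
  then show ?thesis
    using card_changed_edges_ge_4_oriented[of V P Q a b] assms by blast
next
  case False
  then have "4 \<le> card (changed_edges V Q P)"
    using card_changed_edges_ge_4_oriented[of V Q P a b] assms by simp
  then show ?thesis
    by (simp add: changed_edges_commute)
qed

lemma cyc_adj_iff:
  assumes "n \<ge> 3"
  shows "cyc_adj n x y \<longleftrightarrow>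
    x < n \<and> y < n \<and> (y = x + 1 \<or> x = y + 1 \<or> (x = 0 \<and> y = n - 1) \<or> (y = 0 \<and> x = n - 1))"
proof -
  have "Suc z mod n = (if z + 1 < n then z + 1 else 0)" if "z < n" for z
  proof (cases "z + 1 < n")
    case False
    with that have "Suc z = n"
      by simp
    then show ?thesis
      by simp
  qed simp
  then show ?thesis
    unfolding cyc_adj_def using assms by (auto split: if_splits)
qed

lemma symp_cyc_adj: "symp (cyc_adj n)"
  unfolding cyc_adj_def by (auto intro: sympI)

lemma irreflp_cyc_adj: "irreflp (cyc_adj n)"
  unfolding cyc_adj_def by (simp add: irreflp_on_def)

lemma card_cyc_adj_neighbours:
  assumes "n \<ge> 3" "v < n"
  shows "card {w \<in> {..<n}. cyc_adj n v w} = 2"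
proof -
  have "{w \<in> {..<n}. cyc_adj n v w} = {if v + 1 < n then v + 1 else 0, if v = 0 then n - 1 else v - 1}"
    using assms by (auto simp: cyc_adj_iff)
  moreover have "(if v + 1 < n then v + 1 else 0) \<noteq> (if v = 0 then n - 1 else v - 1)"
    using assms by auto
  ultimately show ?thesis
    by simp
qed

lemma ccyc_dist_eq_1:
  assumes "ccyc_adj n x y"
  shows "ccyc_dist n x y = 1"
  unfolding ccyc_dist_def
proof (rule Least_equality)
  show "ccyc_walk n 1 x y"
    using assms by simp
  show "1 \<le> k" if "ccyc_walk n k x y" for k
    using that assms by (cases k) (auto simp: ccyc_adj_def)
qed

lemma ccyc_common_neighbour:
  assumes "n \<ge> 5" "cyc_adj n x y"
  obtains z where "ccyc_adj n x z" "ccyc_adj n z y"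
proof -
  have "y = x + 1 \<or> x = y + 1 \<or> (x = 0 \<and> y = n - 1) \<or> (y = 0 \<and> x = n - 1)"
    using assms by (simp add: cyc_adj_iff)
  moreover
  \<comment> \<open>z = u + 3 mod n for the cycle edge {u, u + 1 mod n}; as n \<ge> 5 it is adjacent to neither end\<close>
  define z where "z = (if y = x + 1 then (x + 3) mod n else if x = y + 1 then (y + 3) mod n else 2)"
  ultimately have "ccyc_adj n x z \<and> ccyc_adj n z y"
    using assms unfolding ccyc_adj_def by (auto simp: cyc_adj_iff z_def mod_if)
  then show thesis
    using that by blast
qed

lemma ccyc_dist_eq_2:
  assumes "n \<ge> 5" "cyc_adj n x y"
  shows "ccyc_dist n x y = 2"
  unfolding ccyc_dist_def
proof (rule Least_equality)
  show "ccyc_walk n 2 x y"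
    using ccyc_common_neighbour[OF assms] by (auto simp: numeral_2_eq_2)
  show "2 \<le> k" if "ccyc_walk n k x y" for k
  proof (rule ccontr)
    assume "\<not> 2 \<le> k"
    then have "k = 0 \<or> k = 1"
      by auto
    then show False
      using that assms(2) by (auto simp: ccyc_adj_def cyc_adj_def)
  qed
qed

lemma ccyc_dist_eq:
  assumes "n \<ge> 5" "x < n" "y < n" "x \<noteq> y"
  shows "ccyc_dist n x y = (if cyc_adj n x y then 2 else 1)"
  using assms ccyc_dist_eq_1 ccyc_dist_eq_2 by (auto simp: ccyc_adj_def)

lemma delta_pair_eq:
  assumes "n \<ge> 5" "is_perm n f" "x < n" "y < n" "x \<noteq> y"
  shows "delta_pair n f x y = (if cyc_adj n x y = cyc_adj n (f x) (f y) then 0 else 1)"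
proof -
  have "f x < n" "f y < n" "f x \<noteq> f y"
    using assms(2-5) by (auto simp: is_perm_def bij_betw_def inj_on_def)
  then show ?thesis
    using assms unfolding delta_pair_def by (simp add: ccyc_dist_eq)
qed

lemma delta_total_eq_card_changed_edges:
  assumes "n \<ge> 5" "is_perm n f"
  shows "delta_total n f = card (changed_edges {..<n} (cyc_adj n) (\<lambda>x y. cyc_adj n (f x) (f y)))"
    (is "_ = card ?C")
proof -
  have "finite {(x, y). x < y \<and> y < n}"
    by (rule finite_subset[of _ "{..<n} \<times> {..<n}"]) auto
  then have "delta_total n f = (\<Sum>p\<in>?C. 1)"
    unfolding delta_total_def
    by (rule sum.mono_neutral_cong_right) (auto simp: changed_edges_def delta_pair_eq assms split: if_splits)
  then show ?thesis
    by simp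
qed

lemma card_cyc_adj_neighbours_perm:
  assumes "n \<ge> 3" "is_perm n f" "v < n"
  shows "card {w \<in> {..<n}. cyc_adj n (f v) (f w)} = 2"
proof -
  have "bij_betw f {w \<in> {..<n}. cyc_adj n (f v) (f w)} {u \<in> {..<n}. cyc_adj n (f v) u}"
    using assms(2) unfolding is_perm_def by (rule bij_betw_Collect) simp
  then have "card {w \<in> {..<n}. cyc_adj n (f v) (f w)} = card {u \<in> {..<n}. cyc_adj n (f v) u}"
    by (rule bij_betw_same_card)
  also have "\<dots> = 2"
    using assms(2,3) by (intro card_cyc_adj_neighbours[OF assms(1)]) (auto simp: is_perm_def bij_betw_def)
  finally show ?thesis .
qed

lemma not_ccyc_aut_changes_cyc_adj:
  assumes "is_perm n f" "\<not> ccyc_aut n f"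
  obtains a b where "a < n" "b < n" "cyc_adj n a b \<noteq> cyc_adj n (f a) (f b)"
proof -
  obtain a b where ab: "a < n" "b < n" "ccyc_adj n (f a) (f b) \<noteq> ccyc_adj n a b"
    using assms unfolding ccyc_aut_def by blast
  moreover have "f a < n" "f b < n" "f a = f b \<longleftrightarrow> a = b"
    using assms(1) ab(1,2) by (auto simp: is_perm_def bij_betw_def inj_on_def)
  ultimately show thesis
    using that unfolding ccyc_adj_def by auto
qed

theorem lemma2p3:
  fixes n :: nat and f :: "nat \<Rightarrow> nat"
  assumes "n \<ge> 5" and "is_perm n f" and "\<not> ccyc_aut n f"
  shows "delta_total n f \<ge> 4"
proof -
  obtain a b where "a < n" "b < n" "cyc_adj n a b \<noteq> cyc_adj n (f a) (f b)"
    using not_ccyc_aut_changes_cyc_adj assms(2,3) by blast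
  moreover have "symp (\<lambda>x y. cyc_adj n (f x) (f y))" "irreflp (\<lambda>x y. cyc_adj n (f x) (f y))"
    using symp_cyc_adj irreflp_cyc_adj by (auto simp: symp_def irreflp_def)
  moreover have "card {w \<in> {..<n}. cyc_adj n v w} = card {w \<in> {..<n}. cyc_adj n (f v) (f w)}"
    if "v \<in> {..<n}" for v
    using that assms(1,2) card_cyc_adj_neighbours card_cyc_adj_neighbours_perm by simp
  ultimately have "4 \<le> card (changed_edges {..<n} (cyc_adj n) (\<lambda>x y. cyc_adj n (f x) (f y)))"
    using symp_cyc_adj irreflp_cyc_adj by (intro card_changed_edges_ge_4) auto
  then show ?thesis
    using assms(1,2) by (simp add: delta_total_eq_card_changed_edges)
qed

end
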